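(* Let $n\ge1$, let $X=\{x_1,\dots,x_n\}$, and let $$W=\{x_ix_jx_k,\ x_ix_kx_j,\ x_ix_jx_ix_k : i>j>k\}\cup\{x_ix_jx_j,\ x_ix_ix_j : i>j\}\subseteq X^*.$$ Let $Q_W$ be the Ufnarovskiĭ graph of $W$ and $W^{(i)}$ the set of $i$-chains, as described in the context. Then: (a) $|W^{(\frac{n(n+1)}2-1)}|=1$, and the unique element of $W^{(\frac{n(n+1)}2-1)}$ has maximal degree among all Anick chains. (b) $W^{(m)}=\emptyset$ for all $m\ge\frac{n(n+1)}2$. (c) $Q_W$ is a finite quiver without oriented cycles. (d) Each $W^{(i)}$ is a finite set.
   Context: $X^*$ is the free monoid on $X$, with empty word $1$. $W$ is the set of leading words of the Gröbner–Shirshov basis of the Chinese algebra of rank $n$, with respect to the length-lexicographic order with $x_n>\dots>x_1$; it is given explicitly in the statement. The Ufnarovskiĭ graph $Q_W$: - Its vertex set is $\{1\}\cup X\cup\{u: u$ is a nonempty proper right factor (suffix) of some element of $W\}$. - It has arrows $1\to x_i$ for each $i$. - It has arrows $u\to v$ between nonempty words whenever the word $uv$ contains some element of $W$ as a factor, but no proper left factor (prefix) of $uv$ does. Chains: - For $i\ge0$, an $i$-chain (Anick chain) is a sequence $(v_1,\dots,v_{i+1})$ of nonempty words such that $1\to v_1\to\cdots\to v_{i+1}$ is a path in $Q_W$. $W^{(i)}$ is the set of $i$-chains, and $W^{(-1)}$ consists of the single empty chain. - The degree of a chain $(v_1,\dots,v_{i+1})$ is the length of the word $v_1\cdots v_{i+1}$;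 its weight is $i+1$. *)

theory Defs
  imports Main "HOL-Library.Sublist"
begin

text \<open>Letters x_1,...,x_n are encoded as the natural numbers 1..n; words in X^* are
  lists of naturals, the empty word 1 is the empty list.\<close>

definition alphabet :: "nat \<Rightarrow> nat set" where
  "alphabet n = {1..n}"

text \<open>Leading words of the Groebner--Shirshov basis of the Chinese algebra of rank n.\<close>
definition chineseW :: "nat \<Rightarrow> nat list set" where
  "chineseW n =
     {[i, j, k] | i j k. i \<le> n \<and> i > j \<and> j > k \<and> k \<ge> 1}
   \<union> {[i, k, j] | i j k. i \<le> n \<and> i > j \<and> j > k \<and> k \<ge> 1}
   \<union> {[i, j, i, k] | i j k. i \<le> n \<and> i > j \<and> j > k \<and> k \<ge> 1}
   \<union> {[i, j, j] | i j. i \<le> n \<and> i > j \<and> j \<ge> 1}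
   \<union> {[i, i, j] | i j. i \<le> n \<and> i > j \<and> j \<ge> 1}"

definition contains_factor :: "nat list set \<Rightarrow> nat list \<Rightarrow> bool" where
  "contains_factor W w \<longleftrightarrow> (\<exists>u\<in>W. sublist u w)"

definition uf_vertices :: "nat list set \<Rightarrow> nat set \<Rightarrow> nat list set" where
  "uf_vertices W X = {[]} \<union> {[x] | x. x \<in> X}
      \<union> {u. u \<noteq> [] \<and> (\<exists>w\<in>W. strict_suffix u w)}"

definition uf_arrows :: "nat list set \<Rightarrow> nat set \<Rightarrow> (nat list \<times> nat list) set" where
  "uf_arrows W X =
     {([], [x]) | x. x \<in> X}
   \<union> {(u, v) | u v. u \<in> uf_vertices W X \<and> v \<in> uf_vertices W X \<and> u \<noteq> [] \<and> v \<noteq> []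
        \<and> contains_factor W (u @ v)
        \<and> \<not> (\<exists>p. strict_prefix p (u @ v) \<and> contains_factor W p)}"

definition chains :: "nat list set \<Rightarrow> nat set \<Rightarrow> nat \<Rightarrow> nat list list set" where
  "chains W X i = {vs. length vs = i + 1 \<and> (\<forall>v\<in>set vs. v \<noteq> [])
      \<and> ([], vs ! 0) \<in> uf_arrows W X
      \<and> (\<forall>k<i. (vs ! k, vs ! Suc k) \<in> uf_arrows W X)}"

definition chain_degree :: "nat list list \<Rightarrow> nat" where
  "chain_degree vs = length (concat vs)"

end

theory Submission
  imports Defs "HOL-Library.Product_Lexorder"
begin

text \<open>
  Every nonempty vertex of \<open>Q\<^sub>W\<close> is a word of length at most 3, and we attach to it a key
  \<open>(a, b)\<close> with \<open>1 \<le> b \<le> a \<le> n\<close>. Along every arrow the key strictly decreases in the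
  lexicographic order, and when it drops to the immediate predecessor the target is forced to be
  the canonical vertex \<open>[a]\<close> or \<open>[a, b]\<close> of the new key. There are \<open>n(n+1)/2\<close> keys, so this
  bounds the length of chains; a chain of maximal length visits every key, starting from
  \<open>[n]\<close>, hence is unique. Moreover the quantity \<open>(a - 1)\<^sup>2 + 2b - 2\<close> drops along every arrow
  by at least the length of the target, which bounds the degree of any chain by \<open>n\<^sup>2\<close>, and
  the maximal chain attains this bound.
\<close>

lemma contains_factor_prefix_mono:
  "contains_factor W p \<Longrightarrow> prefix p q \<Longrightarrow> contains_factor W q"
  unfolding contains_factor_def by (meson prefix_imp_sublist sublist_order.order.trans)

lemma ex_strict_prefix_contains_factor_iff:
  assumes "w \<noteq> []"
  shows "(\<exists>p. strict_prefix p w \<and> contains_factor W p) \<longleftrightarrow> contains_factor W (butlast w)"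
proof
  assume "\<exists>p. strict_prefix p w \<and> contains_factor W p"
  then obtain p z where "contains_factor W p" "w = p @ z" "z \<noteq> []"
    by (auto simp: strict_prefix_def prefix_def)
  then show "contains_factor W (butlast w)"
    by (metis butlast_append contains_factor_prefix_mono prefixI)
next
  assume "contains_factor W (butlast w)"
  moreover have "strict_prefix (butlast w) w"
    using assms
    by (metis append_butlast_last_id append_self_conv not_Cons_self2 prefixI strict_prefixI)
  ultimately show "\<exists>p. strict_prefix p w \<and> contains_factor W p" by blast
qed

lemma uf_arrows_Nil_iff: "([], v) \<in> uf_arrows W X \<longleftrightarrow> (\<exists>x\<in>X. v = [x])"
  by (auto simp: uf_arrows_def)

lemma uf_arrows_iff:
  assumes "u \<noteq> []"
  shows "(u, v) \<in> uf_arrows W X \<longleftrightarrow> u \<in> uf_vertices W X \<and> v \<in> uf_vertices W X \<and> v \<noteq> []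
    \<and> contains_factor W (u @ v) \<and> \<not> contains_factor W (butlast (u @ v))"
  using assms ex_strict_prefix_contains_factor_iff[of "u @ v" W] by (auto simp: uf_arrows_def)

lemma uf_arrows_subset: "uf_arrows W X \<subseteq> uf_vertices W X \<times> uf_vertices W X"
  by (auto simp: uf_arrows_def uf_vertices_def)

lemma finite_uf_vertices:
  assumes "finite W" "finite X"
  shows "finite (uf_vertices W X)"
proof (rule finite_subset)
  show "uf_vertices W X \<subseteq> insert [] ((\<lambda>x. [x]) ` X \<union> (\<Union>w\<in>W. set (suffixes w)))"
    by (auto simp: uf_vertices_def strict_suffix_def)
  show "finite (insert [] ((\<lambda>x. [x]) ` X \<union> (\<Union>w\<in>W. set (suffixes w))))"
    using assms by simp
qed

lemma finite_uf_arrows: "finite (uf_vertices W X) \<Longrightarrow> finite (uf_arrows W X)"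
  by (rule finite_subset[OF uf_arrows_subset]) simp

lemma finite_chains:
  assumes "finite (uf_vertices W X)"
  shows "finite (chains W X i)"
proof (rule finite_subset)
  show "chains W X i \<subseteq> {vs. set vs \<subseteq> uf_vertices W X \<and> length vs \<le> Suc i}"
  proof clarify
    fix vs assume vs: "vs \<in> chains W X i"
    have "vs ! k \<in> uf_vertices W X" if "k < length vs" for k
    proof (cases k)
      case 0
      then show ?thesis using vs uf_arrows_subset by (auto simp: chains_def)
    next
      case (Suc k')
      then have "(vs ! k', vs ! k) \<in> uf_arrows W X" using vs that by (auto simp: chains_def)
      then show ?thesis using uf_arrows_subset by blast
    qed
    then show "set vs \<subseteq> uf_vertices W X \<and> length vs \<le> Suc i"
      using vs by (auto simp: chains_def in_set_conv_nth)
  qed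
  show "finite {vs. set vs \<subseteq> uf_vertices W X \<and> length vs \<le> Suc i}"
    using assms by (rule finite_lists_length_le)
qed

lemma acyclic_if_measure_decreasing:
  fixes f :: "'a \<Rightarrow> nat"
  assumes "\<And>u v. (u, v) \<in> r \<Longrightarrow> f v < f u"
  shows "acyclic r"
proof -
  have "r\<inverse> \<subseteq> measure f" using assms by auto
  then have "wf (r\<inverse>)" using wf_measure wf_subset by blast
  then show ?thesis using wf_acyclic acyclic_converse by blast
qed

lemma sum_telescope_le:
  fixes g l :: "nat \<Rightarrow> nat"
  assumes "j \<le> i" "\<And>k. j \<le> k \<Longrightarrow> k < i \<Longrightarrow> g (Suc k) + l k \<le> g k"
  shows "(\<Sum>k = j..<i. l k) + g i \<le> g j"
  using assms by (induction i rule: dec_induct) fastforce+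

lemma sum_telescope_eq:
  fixes g l :: "nat \<Rightarrow> nat"
  assumes "j \<le> i" "\<And>k. j \<le> k \<Longrightarrow> k < i \<Longrightarrow> g (Suc k) + l k = g k"
  shows "(\<Sum>k = j..<i. l k) + g i = g j"
  using assms by (induction i rule: dec_induct) fastforce+

lemma chain_degree_conv_nth:
  "length vs = Suc i \<Longrightarrow> chain_degree vs = length (vs ! 0) + (\<Sum>k<i. length (vs ! Suc k))"
  by (simp add: chain_degree_def length_concat sum_list_sum_nth atLeast0LessThan
      sum.lessThan_Suc_shift del: sum.lessThan_Suc)

fun chinese_word :: "nat \<Rightarrow> nat list \<Rightarrow> bool" where
  "chinese_word n [i, j, k] \<longleftrightarrow> i \<le> n \<and> 1 \<le> j \<and> 1 \<le> k \<and>
     (j < i \<and> k < j \<or> j < k \<and> k < i \<or> j < i \<and> j = k \<or> i = j \<and> k < j)"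
| "chinese_word n [i, j, i', k] \<longleftrightarrow> i' = i \<and> i \<le> n \<and> j < i \<and> k < j \<and> 1 \<le> k"
| "chinese_word n _ \<longleftrightarrow> False"

fun has_chinese_factor :: "nat \<Rightarrow> nat list \<Rightarrow> bool" where
  "has_chinese_factor n [] \<longleftrightarrow> False"
| "has_chinese_factor n (x # xs) \<longleftrightarrow>
     chinese_word n (take 3 (x # xs)) \<or> chinese_word n (take 4 (x # xs)) \<or> has_chinese_factor n xs"

lemma chinese_word_length: "chinese_word n w \<Longrightarrow> length w = 3 \<or> length w = 4"
  by (induction n w rule: chinese_word.induct) auto

lemma mem_chineseW_iff: "w \<in> chineseW n \<longleftrightarrow> chinese_word n w"
proof
  show "w \<in> chineseW n \<Longrightarrow> chinese_word n w" unfolding chineseW_def by auto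
  show "chinese_word n w \<Longrightarrow> w \<in> chineseW n"
    unfolding chineseW_def by (induction n w rule: chinese_word.induct) auto
qed

lemma finite_chineseW: "finite (chineseW n)"
proof (rule finite_subset)
  show "chineseW n \<subseteq> {w. set w \<subseteq> {..n} \<and> length w \<le> 4}"
    unfolding chineseW_def by auto
qed (rule finite_lists_length_le, simp)

lemma ex_chineseW_prefix_iff:
  "(\<exists>u\<in>chineseW n. prefix u w) \<longleftrightarrow> chinese_word n (take 3 w) \<or> chinese_word n (take 4 w)"
proof
  assume "\<exists>u\<in>chineseW n. prefix u w"
  then obtain u where u: "chinese_word n u" "prefix u w" by (auto simp: mem_chineseW_iff)
  then have "u = take (length u) w" by (metis append_eq_conv_conj prefix_def)
  with u chinese_word_length[OF u(1)]
  show "chinese_word n (take 3 w) \<or> chinese_word n (take 4 w)" by auto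
next
  assume "chinese_word n (take 3 w) \<or> chinese_word n (take 4 w)"
  then show "\<exists>u\<in>chineseW n. prefix u w" by (meson mem_chineseW_iff take_is_prefix)
qed

lemma contains_factor_chineseW_iff: "contains_factor (chineseW n) w \<longleftrightarrow> has_chinese_factor n w"
proof (induction w)
  case Nil
  then show ?case by (auto simp: contains_factor_def mem_chineseW_iff dest: chinese_word_length)
next
  case (Cons x xs)
  have "contains_factor (chineseW n) (x # xs) \<longleftrightarrow>
      (\<exists>u\<in>chineseW n. prefix u (x # xs)) \<or> contains_factor (chineseW n) xs"
    unfolding contains_factor_def sublist_Cons_right by blast
  then show ?case using Cons ex_chineseW_prefix_iff by simp
qed

fun chinese_vertex :: "nat \<Rightarrow> nat list \<Rightarrow> bool" where
  "chinese_vertex n [a] \<longleftrightarrow> 1 \<le> a \<and> a \<le> n"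
| "chinese_vertex n [a, b] \<longleftrightarrow> 1 \<le> a \<and> 1 \<le> b \<and> a \<le> n \<and> (b < a \<or> a \<le> b \<and> b < n)"
| "chinese_vertex n [b, a, c] \<longleftrightarrow> 1 \<le> c \<and> c < b \<and> b < a \<and> a \<le> n"
| "chinese_vertex n _ \<longleftrightarrow> False"

lemma chinese_vertex_nonempty: "chinese_vertex n u \<Longrightarrow> u \<noteq> []"
  by auto

lemma chinese_vertex_cases:
  assumes "chinese_vertex n u"
  obtains a where "u = [a]" | a b where "u = [a, b]" | a b c where "u = [a, b, c]"
  using assms by (cases "(n, u)" rule: chinese_vertex.cases) auto

lemma strict_suffix_Cons_iff: "strict_suffix u (x # xs) \<longleftrightarrow> suffix u xs"
  by (auto simp: strict_suffix_def suffix_def Cons_eq_append_conv dest: suffix_length_le)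

lemma chinese_vertex_if_uf_vertex:
  assumes "u \<in> uf_vertices (chineseW n) (alphabet n)" "u \<noteq> []"
  shows "chinese_vertex n u"
proof -
  consider x where "u = [x]" "x \<in> {1..n}" | w where "chinese_word n w" "strict_suffix u w"
    using assms by (auto simp: uf_vertices_def alphabet_def mem_chineseW_iff)
  then show ?thesis
  proof cases
    case 2
    then show ?thesis using assms(2)
      by (induction n w rule: chinese_word.induct)
        (auto simp: strict_suffix_Cons_iff suffix_Cons suffix_Nil)
  qed simp
qed

lemma uf_vertex_if_chinese_vertex:
  assumes "chinese_vertex n u"
  shows "u \<in> uf_vertices (chineseW n) (alphabet n)"
proof -
  have "u \<in> {[x] | x. x \<in> alphabet n} \<or> (\<exists>w. chinese_word n w \<and> strict_suffix u w)"
    using assms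
  proof (cases rule: chinese_vertex_cases)
    case (2 a b)
    let ?w = "if b < a then [a, a, b] else [n, a, b]"
    have "chinese_word n ?w \<and> strict_suffix u ?w"
      using assms 2 by (auto simp: strict_suffix_Cons_iff)
    then show ?thesis by blast
  next
    case (3 b a c)
    have "chinese_word n [a, b, a, c] \<and> strict_suffix u [a, b, a, c]"
      using assms 3 by (simp add: strict_suffix_Cons_iff)
    then show ?thesis by blast
  qed (use assms in \<open>auto simp: alphabet_def\<close>)
  then show ?thesis by (auto simp: uf_vertices_def mem_chineseW_iff)
qed

lemma uf_vertices_chineseW:
  "uf_vertices (chineseW n) (alphabet n) = insert [] (Collect (chinese_vertex n))"
proof (intro equalityI subsetI)
  fix u assume "u \<in> uf_vertices (chineseW n) (alphabet n)"
  then show "u \<in> insert [] (Collect (chinese_vertex n))" using chinese_vertex_if_uf_vertex by blast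
next
  fix u assume "u \<in> insert [] (Collect (chinese_vertex n))"
  then show "u \<in> uf_vertices (chineseW n) (alphabet n)"
  proof
    assume "u = []"
    then show ?thesis by (simp add: uf_vertices_def)
  qed (simp add: uf_vertex_if_chinese_vertex)
qed

lemma uf_arrows_chineseW_iff:
  assumes "u \<noteq> []"
  shows "(u, v) \<in> uf_arrows (chineseW n) (alphabet n) \<longleftrightarrow>
    chinese_vertex n u \<and> chinese_vertex n v
    \<and> has_chinese_factor n (u @ v) \<and> \<not> has_chinese_factor n (butlast (u @ v))"
  using assms chinese_vertex_nonempty[of n v]
  by (auto simp: uf_arrows_iff uf_vertices_chineseW contains_factor_chineseW_iff)

fun vertex_key :: "nat list \<Rightarrow> nat \<times> nat" where
  "vertex_key [a] = (a, a)"
| "vertex_key [a, b] = (if b < a then (a, b) else (b, b))"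
| "vertex_key [b, a, c] = (a, c)"
| "vertex_key _ = (0, 0)"

definition key_triangle :: "nat \<Rightarrow> (nat \<times> nat) set" where
  "key_triangle n = {(a, b). 1 \<le> b \<and> b \<le> a \<and> a \<le> n}"

fun key_pred :: "nat \<times> nat \<Rightarrow> nat \<times> nat" where
  "key_pred (a, b) = (if 1 < b then (a, b - 1) else (a - 1, a - 1))"

fun canonical_vertex :: "nat \<times> nat \<Rightarrow> nat list" where
  "canonical_vertex (a, b) = (if a = b then [a] else [a, b])"

lemma vertex_key_mem_key_triangle: "chinese_vertex n u \<Longrightarrow> vertex_key u \<in> key_triangle n"
  by (induction n u rule: chinese_vertex.induct) (auto simp: key_triangle_def)

lemma canonical_vertex_key:
  assumes "k \<in> key_triangle n"
  shows "chinese_vertex n (canonical_vertex k)" "vertex_key (canonical_vertex k) = k"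
  using assms by (auto simp: key_triangle_def)

lemma key_pred_mem_key_triangle:
  "k \<in> key_triangle n \<Longrightarrow> k \<noteq> (1, 1) \<Longrightarrow> key_pred k \<in> key_triangle n"
  by (cases k) (auto simp: key_triangle_def split: if_splits)

text \<open>The position of a key in the lexicographic enumeration of \<open>key_triangle n\<close>.\<close>

definition key_rank :: "nat \<times> nat \<Rightarrow> nat" where
  "key_rank k = (fst k choose 2) + snd k"

lemma Suc_choose_two: "Suc m choose 2 = (m choose 2) + m"
  by (simp add: numeral_2_eq_2)

lemma key_rank_less:
  assumes "k \<in> key_triangle n" "k' \<in> key_triangle n" "k' < k"
  shows "key_rank k' < key_rank k" "key_rank k' + 1 = key_rank k \<Longrightarrow> k' = key_pred k"
proof -
  obtain a b a' b' where k: "k = (a, b)" "k' = (a', b')" by fastforce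
  have ab: "1 \<le> b" "b \<le> a" "1 \<le> b'" "b' \<le> a'" "a' < a \<or> a' = a \<and> b' < b"
    using assms by (auto simp: k key_triangle_def)
  consider "a' = a" | "a = Suc a'" | "Suc (Suc a') \<le> a" using ab by linarith
  then have "key_rank k' < key_rank k \<and> (key_rank k' + 1 = key_rank k \<longrightarrow> k' = key_pred k)"
  proof cases
    case 3
    then have "(Suc (Suc a') choose 2) \<le> (a choose 2)" by (rule binomial_right_mono)
    then show ?thesis using ab by (simp add: k key_rank_def Suc_choose_two)
  qed (use ab in \<open>auto simp: k key_rank_def Suc_choose_two\<close>)
  then show "key_rank k' < key_rank k" "key_rank k' + 1 = key_rank k \<Longrightarrow> k' = key_pred k"
    by blast+
qed

lemma key_rank_key_pred:
  assumes "k \<in> key_triangle n" "k \<noteq> (1, 1)"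
  shows "key_rank (key_pred k) + 1 = key_rank k"
proof -
  obtain a b where k: "k = (a, b)" by fastforce
  show ?thesis
  proof (cases "1 < b")
    case False
    then obtain m where "a = Suc m" "b = 1"
      using assms by (cases a) (auto simp: k key_triangle_def)
    then show ?thesis by (simp add: k key_rank_def Suc_choose_two)
  qed (simp add: k key_rank_def)
qed

lemma key_rank_pos: "k \<in> key_triangle n \<Longrightarrow> 1 \<le> key_rank k"
  by (auto simp: key_triangle_def key_rank_def)

lemma key_rank_eq_1_iff:
  assumes "k \<in> key_triangle n"
  shows "key_rank k = 1 \<longleftrightarrow> k = (1, 1)"
proof
  obtain a b where k: "k = (a, b)" and ab: "1 \<le> b" "b \<le> a"
    using assms by (auto simp: key_triangle_def)
  assume "key_rank k = 1"
  then have "(a choose 2) + b = 1" by (simp add: k key_rank_def)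
  then have "a choose 2 = 0" and b: "b = 1" using ab by linarith+
  then have "a < 2" by (simp add: binomial_eq_0_iff)
  then show "k = (1, 1)" using ab b by (simp add: k)
qed (simp add: key_rank_def binomial_eq_0_iff)

lemma key_rank_le_diag:
  assumes "k \<in> key_triangle n"
  shows "key_rank k \<le> key_rank (n, n)"
proof -
  have "(n, n) \<in> key_triangle n" "k = (n, n) \<or> k < (n, n)"
    using assms by (auto simp: key_triangle_def)
  then show ?thesis using key_rank_less(1)[OF _ assms] by fastforce
qed

lemma key_rank_diag: "key_rank (n, n) = n * (n + 1) div 2"
proof -
  have "key_rank (n, n) = Suc n choose 2" by (simp add: key_rank_def Suc_choose_two)
  then show ?thesis by (simp add: choose_two mult.commute)
qed

text \<open>The budget of \<open>[a]\<close> is \<open>a\<^sup>2 - 1\<close>; it bounds the total length of the vertices that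
  follow \<open>[a]\<close> in a chain.\<close>

definition key_budget :: "nat \<times> nat \<Rightarrow> nat" where
  "key_budget k = (fst k - 1)\<^sup>2 + 2 * snd k - 2"

lemma key_budget_diag: "1 \<le> a \<Longrightarrow> key_budget (a, a) + 1 = a\<^sup>2"
  by (cases a) (auto simp: key_budget_def power2_eq_square)

text \<open>A linear sufficient condition for \<open>key_budget k' + l \<le> key_budget k\<close>; it keeps the case
  analysis of arrows within linear arithmetic.\<close>

fun budget_step :: "nat \<times> nat \<Rightarrow> nat \<Rightarrow> nat \<times> nat \<Rightarrow> bool" where
  "budget_step (a, b) l (a', b') \<longleftrightarrow>
     a' = a \<and> 2 * b' + l \<le> 2 * b \<or> a' < a \<and> 2 * b' + l + 1 \<le> 2 * a' + 2 * b"

lemma key_budget_step: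
  assumes "k \<in> key_triangle n" "k' \<in> key_triangle n" "budget_step k l k'"
  shows "key_budget k' + l \<le> key_budget k"
proof -
  obtain a b a' b' where k: "k = (a, b)" "k' = (a', b')" by fastforce
  have ab: "1 \<le> b" "1 \<le> b'" "1 \<le> a'"
    and step: "a' = a \<and> 2 * b' + l \<le> 2 * b \<or> a' < a \<and> 2 * b' + l + 1 \<le> 2 * a' + 2 * b"
    using assms by (auto simp: k key_triangle_def)
  show ?thesis
  proof (cases "a' = a")
    case False
    then have "a' < a" "2 * b' + l + 1 \<le> 2 * a' + 2 * b" using step by auto
    moreover have "a'\<^sup>2 \<le> (a - 1)\<^sup>2" using \<open>a' < a\<close> by (intro power_mono) auto
    moreover have "a'\<^sup>2 = (a' - 1)\<^sup>2 + 2 * a' - 1"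
      using ab by (cases a') (auto simp: power2_eq_square)
    ultimately show ?thesis using ab by (simp add: k key_budget_def)
  qed (use ab step in \<open>auto simp: k key_budget_def\<close>)
qed

lemma key_budget_key_pred:
  assumes "k \<in> key_triangle n" "k \<noteq> (1, 1)"
  shows "key_budget (key_pred k) + length (canonical_vertex (key_pred k)) = key_budget k"
proof -
  obtain a b where k: "k = (a, b)" by fastforce
  show ?thesis
  proof (cases "1 < b")
    case False
    then obtain m where "a = Suc (Suc m)" "b = 1"
      using assms by (cases a; cases "a - 1") (auto simp: k key_triangle_def)
    then show ?thesis by (simp add: k key_budget_def power2_eq_square)
  qed (use assms in \<open>auto simp: k key_triangle_def key_budget_def\<close>)
qed

lemma chinese_arrow_step:
  assumes "chinese_vertex n u" "chinese_vertex n v"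
    and "has_chinese_factor n (u @ v)" "\<not> has_chinese_factor n (butlast (u @ v))"
  shows "vertex_key v < vertex_key u \<and> budget_step (vertex_key u) (length v) (vertex_key v)
    \<and> (vertex_key v = key_pred (vertex_key u) \<longrightarrow> v = canonical_vertex (vertex_key v))"
  using assms(1)
proof (cases rule: chinese_vertex_cases)
  case (1 a)
  from assms(2) show ?thesis
    by (cases rule: chinese_vertex_cases) (use assms 1 in \<open>simp; arith\<close>)+
next
  case (2 a b)
  from assms(2) show ?thesis
    by (cases rule: chinese_vertex_cases) (use assms 2 in \<open>simp; arith\<close>)+
next
  case (3 a b c)
  from assms(2) show ?thesis
    by (cases rule: chinese_vertex_cases) (use assms 3 in \<open>simp; arith\<close>)+
qed

abbreviation chinese_arrows :: "nat \<Rightarrow> (nat list \<times> nat list) set" where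
  "chinese_arrows n \<equiv> uf_arrows (chineseW n) (alphabet n)"

abbreviation chinese_chains :: "nat \<Rightarrow> nat \<Rightarrow> nat list list set" where
  "chinese_chains n \<equiv> chains (chineseW n) (alphabet n)"

lemma chinese_arrowD:
  assumes "(u, v) \<in> chinese_arrows n" "u \<noteq> []"
  shows "chinese_vertex n v"
    and "key_rank (vertex_key v) < key_rank (vertex_key u)"
    and "key_budget (vertex_key v) + length v \<le> key_budget (vertex_key u)"
    and "key_rank (vertex_key v) + 1 = key_rank (vertex_key u) \<Longrightarrow>
      v = canonical_vertex (key_pred (vertex_key u))"
proof -
  have u: "chinese_vertex n u" and v: "chinese_vertex n v"
    and step: "vertex_key v < vertex_key u" "budget_step (vertex_key u) (length v) (vertex_key v)"
      "vertex_key v = key_pred (vertex_key u) \<Longrightarrow> v = canonical_vertex (vertex_key v)"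
    using assms chinese_arrow_step[of n u v] by (auto simp: uf_arrows_chineseW_iff)
  note keys = vertex_key_mem_key_triangle[OF u] vertex_key_mem_key_triangle[OF v]
  show "chinese_vertex n v" by (fact v)
  show "key_rank (vertex_key v) < key_rank (vertex_key u)"
    using key_rank_less(1)[OF keys step(1)] .
  show "key_budget (vertex_key v) + length v \<le> key_budget (vertex_key u)"
    using key_budget_step[OF keys step(2)] .
  assume "key_rank (vertex_key v) + 1 = key_rank (vertex_key u)"
  then have "vertex_key v = key_pred (vertex_key u)" by (rule key_rank_less(2)[OF keys step(1)])
  with step(3) show "v = canonical_vertex (key_pred (vertex_key u))" by simp
qed

lemma canonical_arrow:
  assumes "k \<in> key_triangle n" "k \<noteq> (1, 1)"
  shows "(canonical_vertex k, canonical_vertex (key_pred k)) \<in> chinese_arrows n"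
proof -
  obtain a b where k: "k = (a, b)" by fastforce
  have "has_chinese_factor n (canonical_vertex k @ canonical_vertex (key_pred k))
    \<and> \<not> has_chinese_factor n (butlast (canonical_vertex k @ canonical_vertex (key_pred k)))"
    using assms by (cases "a = b"; cases "b = 1"; cases "a = 2") (auto simp: k key_triangle_def)
  moreover have "chinese_vertex n (canonical_vertex k)"
    "chinese_vertex n (canonical_vertex (key_pred k))"
    using assms canonical_vertex_key(1) key_pred_mem_key_triangle by blast+
  ultimately show ?thesis
    by (simp add: uf_arrows_chineseW_iff chinese_vertex_nonempty)
qed

lemma chinese_chain_first:
  assumes "vs \<in> chinese_chains n i"
  obtains a where "vs ! 0 = [a]" "1 \<le> a" "a \<le> n"
  using assms by (auto simp: chains_def uf_arrows_Nil_iff alphabet_def)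

lemma chinese_chain_arrow:
  assumes "vs \<in> chinese_chains n i" "k < i"
  shows "(vs ! k, vs ! Suc k) \<in> chinese_arrows n" "vs ! k \<noteq> []"
  using assms by (auto simp: chains_def)

lemma chinese_chain_vertex:
  assumes "vs \<in> chinese_chains n i" "k \<le> i"
  shows "chinese_vertex n (vs ! k)"
proof (cases k)
  case 0
  then show ?thesis using assms(1) by (elim chinese_chain_first) simp
next
  case (Suc m)
  then show ?thesis using assms chinese_chain_arrow[OF assms(1), of m] chinese_arrowD(1) by simp
qed

lemma chinese_chain_rank_decrease:
  assumes "vs \<in> chinese_chains n i" "j \<le> k" "k \<le> i"
  shows "(k - j) + key_rank (vertex_key (vs ! k)) \<le> key_rank (vertex_key (vs ! j))"
proof -
  have "(\<Sum>m = j..<k. 1) + key_rank (vertex_key (vs ! k)) \<le> key_rank (vertex_key (vs ! j))"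
  proof (rule sum_telescope_le[OF assms(2)])
    fix m assume "j \<le> m" "m < k"
    then have "m < i" using assms(3) by simp
    then show "key_rank (vertex_key (vs ! Suc m)) + 1 \<le> key_rank (vertex_key (vs ! m))"
      using chinese_arrowD(2)[OF chinese_chain_arrow[OF assms(1)]] by (simp add: Suc_le_eq)
  qed
  then show ?thesis by simp
qed

lemma chinese_chain_first_rank:
  assumes "vs \<in> chinese_chains n i"
  shows "key_rank (vertex_key (vs ! 0)) \<le> key_rank (n, n)"
  using assms by (elim chinese_chain_first) (simp add: key_rank_le_diag key_triangle_def)

lemma chinese_chain_length_less:
  assumes "vs \<in> chinese_chains n i"
  shows "i < key_rank (n, n)"
  using chinese_chain_rank_decrease[OF assms, of 0 i] chinese_chain_first_rank[OF assms]
    key_rank_pos[OF vertex_key_mem_key_triangle[OF chinese_chain_vertex[OF assms, of i]]]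
  by simp

lemma chinese_chain_degree_le:
  assumes "vs \<in> chinese_chains n i"
  shows "chain_degree vs \<le> n\<^sup>2"
proof -
  obtain a where a: "vs ! 0 = [a]" "1 \<le> a" "a \<le> n" using assms by (rule chinese_chain_first)
  have "(\<Sum>k = 0..<i. length (vs ! Suc k)) + key_budget (vertex_key (vs ! i))
      \<le> key_budget (vertex_key (vs ! 0))"
    using chinese_chain_arrow[OF assms] by (intro sum_telescope_le chinese_arrowD(3)) auto
  then have "chain_degree vs \<le> 1 + key_budget (a, a)"
    using a chain_degree_conv_nth[of vs i] assms by (simp add: chains_def atLeast0LessThan)
  also have "\<dots> = a\<^sup>2" using key_budget_diag[OF a(2)] by simp
  also have "\<dots> \<le> n\<^sup>2" using a(3) by (rule power_mono) simp
  finally show ?thesis .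
qed

lemma key_pred_iterate:
  assumes "1 \<le> n" "k < key_rank (n, n)"
  shows "(key_pred ^^ k) (n, n) \<in> key_triangle n"
    and "key_rank ((key_pred ^^ k) (n, n)) + k = key_rank (n, n)"
    and "Suc k < key_rank (n, n) \<Longrightarrow> (key_pred ^^ k) (n, n) \<noteq> (1, 1)"
proof -
  have "(key_pred ^^ k) (n, n) \<in> key_triangle n
      \<and> key_rank ((key_pred ^^ k) (n, n)) + k = key_rank (n, n)"
    using assms(2)
  proof (induction k)
    case 0
    then show ?case using assms(1) by (simp add: key_triangle_def)
  next
    case (Suc k)
    let ?k = "(key_pred ^^ k) (n, n)"
    have k: "?k \<in> key_triangle n" "key_rank ?k + k = key_rank (n, n)"
      using Suc by auto
    then have "?k \<noteq> (1, 1)" using Suc.prems key_rank_eq_1_iff by fastforce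
    then show ?case using k key_pred_mem_key_triangle key_rank_key_pred by fastforce
  qed
  then show "(key_pred ^^ k) (n, n) \<in> key_triangle n"
    and "key_rank ((key_pred ^^ k) (n, n)) + k = key_rank (n, n)" by blast+
  then show "Suc k < key_rank (n, n) \<Longrightarrow> (key_pred ^^ k) (n, n) \<noteq> (1, 1)"
    using key_rank_eq_1_iff by fastforce
qed

definition maximal_chinese_chain :: "nat \<Rightarrow> nat list list" where
  "maximal_chinese_chain n =
     map (\<lambda>k. canonical_vertex ((key_pred ^^ k) (n, n))) [0..<key_rank (n, n)]"

lemma length_maximal_chinese_chain: "length (maximal_chinese_chain n) = key_rank (n, n)"
  by (simp add: maximal_chinese_chain_def)

lemma nth_maximal_chinese_chain:
  "k < key_rank (n, n) \<Longrightarrow>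
    maximal_chinese_chain n ! k = canonical_vertex ((key_pred ^^ k) (n, n))"
  by (simp add: maximal_chinese_chain_def)

lemma maximal_chinese_chain_mem:
  assumes "1 \<le> n"
  shows "maximal_chinese_chain n \<in> chinese_chains n (key_rank (n, n) - 1)"
proof -
  let ?N = "key_rank (n, n)" and ?c = "maximal_chinese_chain n"
  have N: "1 \<le> ?N" using assms by (intro key_rank_pos[of _ n]) (simp add: key_triangle_def)
  have "([], ?c ! 0) \<in> chinese_arrows n"
    using N assms by (simp add: nth_maximal_chinese_chain uf_arrows_Nil_iff alphabet_def)
  moreover have "?c ! k \<noteq> []" if "k < length ?c" for k
  proof -
    have "chinese_vertex n (?c ! k)"
      using that canonical_vertex_key(1)[OF key_pred_iterate(1)[OF assms]]
      by (simp add: length_maximal_chinese_chain nth_maximal_chinese_chain)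
    then show ?thesis by (rule chinese_vertex_nonempty)
  qed
  moreover have "(?c ! k, ?c ! Suc k) \<in> chinese_arrows n" if "k < ?N - 1" for k
    using that canonical_arrow key_pred_iterate[OF assms, of k]
    by (simp add: nth_maximal_chinese_chain)
  ultimately show ?thesis
    using N by (auto simp: chains_def length_maximal_chinese_chain in_set_conv_nth)
qed

lemma chain_degree_maximal_chinese_chain:
  assumes "1 \<le> n"
  shows "chain_degree (maximal_chinese_chain n) = n\<^sup>2"
proof -
  let ?N = "key_rank (n, n)" and ?key = "\<lambda>k. (key_pred ^^ k) (n, n)"
  have N: "1 \<le> ?N" using assms by (intro key_rank_pos[of _ n]) (simp add: key_triangle_def)
  have "key_budget (?key (Suc k)) + length (canonical_vertex (key_pred (?key k)))
      = key_budget (?key k)" if "k < ?N - 1" for k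
    using that key_budget_key_pred[OF key_pred_iterate(1,3)[OF assms]] by simp
  then have "(\<Sum>k = 0..<?N - 1. length (canonical_vertex (key_pred (?key k))))
      + key_budget (?key (?N - 1)) = key_budget (?key 0)"
    by (intro sum_telescope_eq) auto
  moreover have "?key (?N - 1) = (1, 1)"
  proof -
    have last: "?N - 1 < ?N" using N by simp
    then have "key_rank (?key (?N - 1)) = 1" using key_pred_iterate(2)[OF assms] by fastforce
    with key_rank_eq_1_iff[OF key_pred_iterate(1)[OF assms last]] show ?thesis by simp
  qed
  ultimately have "chain_degree (maximal_chinese_chain n) = 1 + key_budget (n, n)"
    using N chain_degree_conv_nth[of "maximal_chinese_chain n" "?N - 1"]
    by (simp add: length_maximal_chinese_chain nth_maximal_chinese_chain atLeast0LessThan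
        key_budget_def)
  then show ?thesis using key_budget_diag[OF assms] by simp
qed

lemma chinese_chain_eq_maximal:
  assumes "vs \<in> chinese_chains n (key_rank (n, n) - 1)"
  shows "vs = maximal_chinese_chain n"
proof -
  let ?N = "key_rank (n, n)" and ?r = "\<lambda>k. key_rank (vertex_key (vs ! k))"
  obtain a where a: "vs ! 0 = [a]" "1 \<le> a" "a \<le> n" using assms by (rule chinese_chain_first)
  have n: "1 \<le> n" and N: "1 \<le> ?N"
    using a key_rank_pos[of "(n, n)" n] by (auto simp: key_triangle_def)
  have rank: "?r k = ?N - k" if "k < ?N" for k
    using that chinese_chain_rank_decrease[OF assms, of 0 k] chinese_chain_first_rank[OF assms]
      chinese_chain_rank_decrease[OF assms, of k "?N - 1"]
      key_rank_pos[OF vertex_key_mem_key_triangle[OF chinese_chain_vertex[OF assms, of "?N - 1"]]]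
    by linarith
  have "vs ! k = canonical_vertex ((key_pred ^^ k) (n, n))" if "k < ?N" for k
    using that
  proof (induction k)
    case 0
    have keys: "(n, n) \<in> key_triangle n" "(a, a) \<in> key_triangle n"
      using a by (auto simp: key_triangle_def)
    have "key_rank (a, a) = ?N" using rank[of 0] N a by simp
    then have "\<not> (a, a) < (n, n)" using key_rank_less(1)[OF keys] by (metis less_irrefl)
    then have "\<not> a < n" by simp
    with a(3) have "a = n" by linarith
    then show ?case using a by simp
  next
    case (Suc k)
    have k: "k < ?N - 1" using Suc.prems by simp
    have "?r (Suc k) + 1 = ?r k" using rank Suc.prems by simp
    then have "vs ! Suc k = canonical_vertex (key_pred (vertex_key (vs ! k)))"
      by (rule chinese_arrowD(4)[OF chinese_chain_arrow[OF assms k]])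
    also have "vertex_key (vs ! k) = (key_pred ^^ k) (n, n)"
      using Suc canonical_vertex_key(2)[OF key_pred_iterate(1)[OF n, of k]] by simp
    finally show ?case by simp
  qed
  then show ?thesis using assms N
    by (intro nth_equalityI) (simp_all add: chains_def length_maximal_chinese_chain
        nth_maximal_chinese_chain)
qed

lemma acyclic_chinese_arrows: "acyclic (chinese_arrows n)"
proof (rule acyclic_if_measure_decreasing)
  fix u v assume uv: "(u, v) \<in> chinese_arrows n"
  let ?f = "\<lambda>u. if u = [] then Suc (key_rank (n, n)) else key_rank (vertex_key u)"
  show "?f v < ?f u"
  proof (cases "u = []")
    case True
    then obtain a where "v = [a]" "1 \<le> a" "a \<le> n"
      using uv by (auto simp: uf_arrows_Nil_iff alphabet_def)
    then show ?thesis using True key_rank_le_diag[of "(a, a)" n] by (simp add: key_triangle_def)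
  next
    case False
    then show ?thesis using uv chinese_arrowD(1,2) chinese_vertex_nonempty by fastforce
  qed
qed

theorem lemma6p3:
  fixes n :: nat
  assumes "n \<ge> 1"
  defines "W \<equiv> chineseW n" and "X \<equiv> alphabet n" and "N \<equiv> n * (n + 1) div 2"
  shows "(card (chains W X (N - 1)) = 1
         \<and> (\<forall>c\<in>chains W X (N - 1). \<forall>i. \<forall>c'\<in>chains W X i.
               chain_degree c' \<le> chain_degree c))
    \<and> (\<forall>m\<ge>N. chains W X m = {})
    \<and> (finite (uf_vertices W X) \<and> finite (uf_arrows W X) \<and> acyclic (uf_arrows W X))
    \<and> (\<forall>i. finite (chains W X i))"
proof -
  have N: "N = key_rank (n, n)" by (simp add: N_def key_rank_diag)
  have top: "chains W X (N - 1) = {maximal_chinese_chain n}"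
    using maximal_chinese_chain_mem[OF assms(1)] chinese_chain_eq_maximal
    unfolding W_def X_def N by blast
  have degree: "\<forall>c\<in>chains W X (N - 1). \<forall>i. \<forall>c'\<in>chains W X i. chain_degree c' \<le> chain_degree c"
    using top chain_degree_maximal_chinese_chain[OF assms(1)] chinese_chain_degree_le
    unfolding W_def X_def by simp
  have empty: "\<forall>m\<ge>N. chains W X m = {}"
    using chinese_chain_length_less unfolding W_def X_def N by (meson equals0I leD)
  have finite_vertices: "finite (uf_vertices W X)"
    unfolding W_def X_def by (simp add: finite_uf_vertices finite_chineseW alphabet_def)
  show ?thesis
    using top degree empty finite_vertices finite_uf_arrows finite_chains acyclic_chinese_arrows
    unfolding W_def X_def by simp
qed

end
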